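(* If there is a vector $y\geq 0$ such that $F(y)\geq 0$, then Condition A1 holds (hence a minimal solution $x_\ast$ exists), and $x_\ast\leq y$.
   Context: Inequalities between vectors/matrices are componentwise. An M-matrix is a matrix $sI-P$ with $P\geq0$ entrywise and $s\geq\rho(P)$ ($\rho$ = spectral radius). Let $M\in\mathbb R^{n\times n}$ be a nonsingular M-matrix, $a\in\mathbb R^n$ with $a\geq 0$, and $b:\mathbb R^n\times\mathbb R^n\to\mathbb R^n$ a bilinear map (not necessarily symmetric) with $b(x,y)\geq 0$ whenever $x,y\geq 0$. A solution of $Mx=a+b(x,x)$ means a vector $x\geq0$ satisfying it; a solution $x_\ast$ is minimal if $x_\ast\leq y$ for every solution $y$. $F(x):=Mx-a-b(x,x)$. A linear map $l:\mathbb R^n\to\mathbb R^m$ is weakly positive if $l(x)\geq 0$ and $l(x)\neq 0$ whenever $x\geq 0$, $x\neq 0$. Condition A1: there exist a weakly positive linear map $l:\mathbb R^n\to\mathbb R^m$ and $z\in\mathbb R^m$, $z\geq 0$, such that for every $x\geq 0$, $l(x)\leq z$ implies $l(M^{-1}(a+b(x,x)))\leq z$. *)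

theory Defs
  imports "HOL-Analysis.Analysis"
begin

definition cplx_mat :: "real^'n^'n \<Rightarrow> complex^'n^'n" where
  "cplx_mat P = (\<chi> i j. complex_of_real (P $ i $ j))"

definition is_eigenvalue :: "real^'n^'n \<Rightarrow> complex \<Rightarrow> bool" where
  "is_eigenvalue P lam \<longleftrightarrow> (\<exists>v::complex^'n. v \<noteq> 0 \<and> cplx_mat P *v v = lam *s v)"

definition spectral_radius :: "real^'n^'n \<Rightarrow> real" where
  "spectral_radius P = Max (cmod ` {lam. is_eigenvalue P lam})"

definition nonneg_mat :: "real^'n^'m \<Rightarrow> bool" where
  "nonneg_mat P \<longleftrightarrow> (\<forall>i j. P $ i $ j \<ge> 0)"

definition M_matrix :: "real^'n^'n \<Rightarrow> bool" where
  "M_matrix M \<longleftrightarrow> (\<exists>s P. M = s *\<^sub>R mat 1 - P \<and> nonneg_mat P \<and> s \<ge> spectral_radius P)"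

definition nonsingular_M_matrix :: "real^'n^'n \<Rightarrow> bool" where
  "nonsingular_M_matrix M \<longleftrightarrow> M_matrix M \<and> invertible M"

definition F_map :: "real^'n^'n \<Rightarrow> real^'n \<Rightarrow> (real^'n \<Rightarrow> real^'n \<Rightarrow> real^'n) \<Rightarrow> real^'n \<Rightarrow> real^'n" where
  "F_map M a b x = M *v x - a - b x x"

definition is_solution :: "real^'n^'n \<Rightarrow> real^'n \<Rightarrow> (real^'n \<Rightarrow> real^'n \<Rightarrow> real^'n) \<Rightarrow> real^'n \<Rightarrow> bool" where
  "is_solution M a b x \<longleftrightarrow> x \<ge> 0 \<and> M *v x = a + b x x"

definition is_minimal_solution :: "real^'n^'n \<Rightarrow> real^'n \<Rightarrow> (real^'n \<Rightarrow> real^'n \<Rightarrow> real^'n) \<Rightarrow> real^'n \<Rightarrow> bool" where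
  "is_minimal_solution M a b x \<longleftrightarrow> is_solution M a b x \<and> (\<forall>y. is_solution M a b y \<longrightarrow> x \<le> y)"

text \<open>A linear map \<open>l : R^n \<rightarrow> R^m\<close> (m arbitrary) is represented by a function
  \<open>real^'n \<Rightarrow> nat \<Rightarrow> real\<close> whose coordinates \<open>i < m\<close> are linear and whose other
  coordinates vanish; vectors of R^m are \<open>nat \<Rightarrow> real\<close> restricted to \<open>i < m\<close>.\<close>

definition linear_to :: "nat \<Rightarrow> (real^'n \<Rightarrow> nat \<Rightarrow> real) \<Rightarrow> bool" where
  "linear_to m l \<longleftrightarrow> (\<forall>i<m. linear (\<lambda>x. l x i)) \<and> (\<forall>x i. i \<ge> m \<longrightarrow> l x i = 0)"

definition weakly_positive :: "nat \<Rightarrow> (real^'n \<Rightarrow> nat \<Rightarrow> real) \<Rightarrow> bool" where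
  "weakly_positive m l \<longleftrightarrow> linear_to m l \<and>
     (\<forall>x::real^'n. x \<ge> 0 \<and> x \<noteq> 0 \<longrightarrow> (\<forall>i<m. l x i \<ge> 0) \<and> (\<exists>i<m. l x i \<noteq> 0))"

definition condition_A1 :: "real^'n^'n \<Rightarrow> real^'n \<Rightarrow> (real^'n \<Rightarrow> real^'n \<Rightarrow> real^'n) \<Rightarrow> bool" where
  "condition_A1 M a b \<longleftrightarrow> (\<exists>(m::nat) (l::real^'n \<Rightarrow> nat \<Rightarrow> real) (z::nat \<Rightarrow> real).
     weakly_positive m l \<and> (\<forall>i<m. z i \<ge> 0) \<and>
     (\<forall>x::real^'n. x \<ge> 0 \<longrightarrow> (\<forall>i<m. l x i \<le> z i) \<longrightarrow>
        (\<forall>i<m. l (matrix_inv M *v (a + b x x)) i \<le> z i)))"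

end

theory Submission
  imports Defs
begin

(* Write  N = M^{-1}  and  phi x = N (a + b(x,x)).  The proof has two independent halves.

   (1) A nonsingular M-matrix is inverse-monotone:  M x >= 0  implies  x >= 0.  For P >= 0 call
       t I - P "shift-monotone" when  (t I - P) x >= 0  forces  x >= 0.  This holds for large t,
       is inherited by larger t, is open downwards, and passes to a limit t0 from above as long as
       t0 I - P stays invertible.  Above the spectral radius  t I - P  is invertible (eigenvalues
       of a matrix form a finite set), so a connectedness argument on the infimum of the
       shift-monotone parameters shows  s I - P  is shift-monotone for every  s >= rho(P).

   (2) Consequently  phi  is monotone and continuous on the nonnegative cone, and  F(y) >= 0
       says exactly  phi y <= y.  Kleene iteration  0, phi 0, phi (phi 0), ...  converges to the
       least fixed point below every nonnegative supersolution; fixed points of phi are the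
       solutions, and the box  [0, y]  is invariant under phi, which gives Condition A1 with l
       the coordinate map. *)

lemma matrix_inv_cancel:
  fixes A :: "real^'n^'n"
  assumes "invertible A"
  shows "A *v (matrix_inv A *v v) = v" and "matrix_inv A *v (A *v v) = v"
proof -
  have "A ** matrix_inv A = mat 1 \<and> matrix_inv A ** A = mat 1"
    using assms unfolding invertible_def matrix_inv_def by (rule someI_ex)
  then show "A *v (matrix_inv A *v v) = v" and "matrix_inv A *v (A *v v) = v"
    by (simp_all add: matrix_vector_mul_assoc)
qed

lemma shift_mult: "(t *\<^sub>R mat 1 - P) *v x = t *\<^sub>R x - P *v (x::real^'n)"
  by (simp add: matrix_vector_mult_diff_rdistrib scaleR_matrix_vector_assoc[symmetric])

lemma nonneg_mat_mult_nonneg: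
  fixes P :: "real^'n^'m"
  assumes "nonneg_mat P" and "0 \<le> x"
  shows "0 \<le> P *v x"
  using assms by (auto simp: less_eq_vec_def nonneg_mat_def matrix_vector_mult_def intro!: sum_nonneg)

lemma eventually_pos_vec:
  fixes f :: "'a \<Rightarrow> real^'n"
  assumes "(f \<longlongrightarrow> v) F" and "\<And>i. 0 < v $ i"
  shows "eventually (\<lambda>x. \<forall>i. 0 < f x $ i) F"
  by (intro eventually_all_finite order_tendstoD(1)[OF tendsto_vec_nth[OF assms(1)]] assms(2))

lemma at_right_zero_witness:
  assumes "eventually P (at_right (0::real))"
  obtains d where "0 < d" and "P d"
  using eventually_happens'[OF trivial_limit_at_right_real
      eventually_conj[OF eventually_at_right_less assms]] by blast

definition shift_monotone :: "real^'n^'n \<Rightarrow> real \<Rightarrow> bool" where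
  "shift_monotone P t \<longleftrightarrow> (\<forall>x. 0 \<le> t *\<^sub>R x - P *v x \<longrightarrow> 0 \<le> x)"

(* A strictly positive u with (t I - P) u strictly positive certifies monotonicity: for a
   counterexample x, the largest k with x - k u >= 0 makes x - k u vanish at a coordinate where
   (t I - P)(x - k u) is positive, which P >= 0 forbids. *)
lemma shift_monotone_witness:
  fixes P :: "real^'n^'n"
  assumes P: "nonneg_mat P" and u: "\<And>i. 0 < u $ i" and tu: "\<And>i. 0 < (t *\<^sub>R u - P *v u) $ i"
  shows "shift_monotone P t"
  unfolding shift_monotone_def
proof (intro allI impI)
  fix x :: "real^'n"
  assume f: "0 \<le> t *\<^sub>R x - P *v x"
  show "0 \<le> x"
  proof (rule ccontr)
    assume "\<not> 0 \<le> x"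
    then obtain j where j: "x $ j < 0" by (auto simp: less_eq_vec_def not_le)
    define k where "k = Min (range (\<lambda>i. x $ i / u $ i))"
    have "k \<in> range (\<lambda>i. x $ i / u $ i)" unfolding k_def by (rule Min_in) auto
    then obtain i0 where i0: "k = x $ i0 / u $ i0" by auto
    have kmin: "k * u $ i \<le> x $ i" for i
    proof -
      have "k \<le> x $ i / u $ i" unfolding k_def by (rule Min_le) auto
      then show ?thesis using u[of i] by (simp add: pos_le_divide_eq)
    qed
    have "k < 0"
      using kmin[of j] j u[of j] by (smt (verit) mult_nonneg_nonneg)
    define z where "z = x - k *\<^sub>R u"
    have z0: "0 \<le> z" using kmin by (simp add: z_def less_eq_vec_def)
    have zi0: "z $ i0 = 0" using i0 u[of i0] by (simp add: z_def)
    have "t *\<^sub>R z - P *v z = (t *\<^sub>R x - P *v x) - k *\<^sub>R (t *\<^sub>R u - P *v u)"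
      by (simp add: z_def algebra_simps)
    moreover have "0 \<le> (t *\<^sub>R x - P *v x) $ i0" using f by (simp add: less_eq_vec_def)
    moreover have "k * (t *\<^sub>R u - P *v u) $ i0 < 0" using \<open>k < 0\<close> tu[of i0] by (rule mult_neg_pos)
    ultimately have "0 < (t *\<^sub>R z - P *v z) $ i0" by simp
    moreover have "0 \<le> (P *v z) $ i0"
      using nonneg_mat_mult_nonneg[OF P z0] by (simp add: less_eq_vec_def)
    ultimately show False by (simp add: zi0)
  qed
qed

(* For t beyond the sum of all entries the all-ones vector is such a witness. *)
lemma shift_monotone_large:
  fixes P :: "real^'n^'n"
  assumes P: "nonneg_mat P" and t: "(\<Sum>i\<in>UNIV. \<Sum>j\<in>UNIV. P $ i $ j) < t"
  shows "shift_monotone P t"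
proof (rule shift_monotone_witness[OF P, of 1])
  fix i
  have "(\<Sum>j\<in>UNIV. P $ i $ j) \<le> (\<Sum>i\<in>UNIV. \<Sum>j\<in>UNIV. P $ i $ j)"
    using P by (intro member_le_sum sum_nonneg) (auto simp: nonneg_mat_def)
  then show "0 < (t *\<^sub>R 1 - P *v 1) $ i"
    using t by (simp add: matrix_vector_mult_def)
qed simp

(* Monotonicity forces injectivity, hence invertibility. *)
lemma shift_monotone_invertible:
  fixes P :: "real^'n^'n"
  assumes "shift_monotone P t"
  shows "invertible (t *\<^sub>R mat 1 - P)"
proof -
  have "x = 0" if "(t *\<^sub>R mat 1 - P) *v x = 0" for x
  proof -
    have "t *\<^sub>R x - P *v x = 0" using that by (simp add: shift_mult)
    moreover have "t *\<^sub>R (- x) - P *v (- x) = - (t *\<^sub>R x - P *v x)"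
      by (simp add: vec_eq_iff matrix_vector_mult_def sum_negf)
    ultimately have "t *\<^sub>R x - P *v x = 0" and "t *\<^sub>R (- x) - P *v (- x) = 0" by simp_all
    then have "0 \<le> x" and "0 \<le> - x"
      using assms unfolding shift_monotone_def by (metis order_refl)+
    then show "x = 0" by (simp add: antisym)
  qed
  then show ?thesis using matrix_left_invertible_ker invertible_left_inverse by blast
qed

lemma shift_monotone_positive_solution:
  fixes P :: "real^'n^'n"
  assumes P: "nonneg_mat P" and Q: "shift_monotone P t"
  obtains u where "\<And>i. 0 < u $ i" and "t *\<^sub>R u - P *v u = 1"
proof
  define u where "u = matrix_inv (t *\<^sub>R mat 1 - P) *v 1"
  show tu: "t *\<^sub>R u - P *v u = 1"
    using matrix_inv_cancel(1)[OF shift_monotone_invertible[OF Q]] by (simp add: u_def shift_mult)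
  moreover have "0 \<le> (1 :: real^'n)" by (simp add: less_eq_vec_def)
  ultimately have u0: "0 \<le> u" using Q unfolding shift_monotone_def by metis
  fix i
  have "t * u $ i = 1 + (P *v u) $ i" using arg_cong[OF tu, of "\<lambda>v. v $ i"] by simp
  moreover have "0 \<le> (P *v u) $ i" using nonneg_mat_mult_nonneg[OF P u0] by (simp add: less_eq_vec_def)
  ultimately have "u $ i \<noteq> 0" by auto
  then show "0 < u $ i" using u0 by (simp add: less_eq_vec_def order_less_le)
qed

(* The witness for t also works for every larger t. *)
lemma shift_monotone_upward:
  fixes P :: "real^'n^'n"
  assumes P: "nonneg_mat P" and Q: "shift_monotone P t" and "t \<le> t'"
  shows "shift_monotone P t'"
proof -
  obtain u where u: "\<And>i. 0 < u $ i" and tu: "t *\<^sub>R u - P *v u = 1"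
    using shift_monotone_positive_solution[OF P Q] by blast
  have "t' *\<^sub>R u - P *v u = 1 + (t' - t) *\<^sub>R u" using tu by (simp add: algebra_simps)
  then show ?thesis
    using \<open>t \<le> t'\<close> u by (intro shift_monotone_witness[OF P u]) (simp add: add_pos_nonneg less_imp_le)
qed

lemma shift_monotone_open:
  fixes P :: "real^'n^'n"
  assumes P: "nonneg_mat P" and Q: "shift_monotone P t"
  obtains t' where "t' < t" and "shift_monotone P t'"
proof -
  obtain u where u: "\<And>i. 0 < u $ i" and tu: "t *\<^sub>R u - P *v u = 1"
    using shift_monotone_positive_solution[OF P Q] by blast
  have "((\<lambda>d. 1 - d *\<^sub>R u) \<longlongrightarrow> 1 - 0 *\<^sub>R u) (at_right 0)"
    by (intro tendsto_intros)
  then have "eventually (\<lambda>d. \<forall>i. 0 < (1 - d *\<^sub>R u) $ i) (at_right 0)"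
    by (rule eventually_pos_vec) simp
  then obtain d :: real where "0 < d" and d: "\<And>i. 0 < (1 - d *\<^sub>R u) $ i"
    by (rule at_right_zero_witness) blast
  have "(t - d) *\<^sub>R u - P *v u = 1 - d *\<^sub>R u" using tu by (simp add: algebra_simps)
  then have "shift_monotone P (t - d)" using d by (intro shift_monotone_witness[OF P u]) simp
  then show thesis using \<open>0 < d\<close> by (intro that[of "t - d"]) auto
qed

(* Monotonicity passes to a limit from above, provided t I - P is invertible: with
   (t I - P) u = 1, the vector x + e u satisfies the hypothesis at t + d for small d > 0,
   so x + e u >= 0 for every e > 0. *)
lemma shift_monotone_closed:
  fixes P :: "real^'n^'n"
  assumes inv: "invertible (t *\<^sub>R mat 1 - P)"
    and above: "\<And>t'. t < t' \<Longrightarrow> shift_monotone P t'"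
  shows "shift_monotone P t"
  unfolding shift_monotone_def
proof (intro allI impI)
  fix x :: "real^'n"
  assume f: "0 \<le> t *\<^sub>R x - P *v x"
  define u where "u = matrix_inv (t *\<^sub>R mat 1 - P) *v 1"
  have tu: "t *\<^sub>R u - P *v u = 1"
    using matrix_inv_cancel(1)[OF inv] by (simp add: u_def shift_mult)
  have perturbed: "0 \<le> x + e *\<^sub>R u" if "0 < e" for e
  proof -
    define w where "w = x + e *\<^sub>R u"
    have "((\<lambda>d. (t *\<^sub>R x - P *v x) + e *\<^sub>R 1 + d *\<^sub>R w)
        \<longlongrightarrow> (t *\<^sub>R x - P *v x) + e *\<^sub>R 1 + 0 *\<^sub>R w) (at_right 0)"
      by (intro tendsto_intros)
    then have "eventually (\<lambda>d. \<forall>i. 0 < ((t *\<^sub>R x - P *v x) + e *\<^sub>R 1 + d *\<^sub>R w) $ i) (at_right 0)"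
      by (rule eventually_pos_vec) (use f \<open>0 < e\<close> in \<open>simp add: less_eq_vec_def add_nonneg_pos\<close>)
    then obtain d :: real where "0 < d"
      and d: "\<And>i. 0 < ((t *\<^sub>R x - P *v x) + e *\<^sub>R 1 + d *\<^sub>R w) $ i"
      by (rule at_right_zero_witness) blast
    have "(t + d) *\<^sub>R w - P *v w = (t *\<^sub>R x - P *v x) + e *\<^sub>R (t *\<^sub>R u - P *v u) + d *\<^sub>R w"
      by (simp add: w_def algebra_simps)
    then have "(t + d) *\<^sub>R w - P *v w = (t *\<^sub>R x - P *v x) + e *\<^sub>R 1 + d *\<^sub>R w"
      by (simp only: tu)
    then have "0 \<le> (t + d) *\<^sub>R w - P *v w" using d by (simp add: less_eq_vec_def less_imp_le)
    then show ?thesis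
      using above[of "t + d"] \<open>0 < d\<close> unfolding shift_monotone_def w_def by simp
  qed
  have "0 \<le> x $ i" for i
  proof (rule tendsto_lowerbound)
    show "((\<lambda>e. x $ i + e * u $ i) \<longlongrightarrow> x $ i) (at_right 0)"
      by (auto intro!: tendsto_eq_intros)
    show "eventually (\<lambda>e. 0 \<le> x $ i + e * u $ i) (at_right 0)"
      using eventually_at_right_less by (rule eventually_mono) (use perturbed in \<open>auto simp: less_eq_vec_def\<close>)
  qed simp
  then show "0 \<le> x" by (simp add: less_eq_vec_def)
qed

lemma eigenvectors_independent:
  fixes A :: "complex^'n^'n" and v :: "complex \<Rightarrow> complex^'n"
  assumes "finite L" and eig: "\<And>l. l \<in> L \<Longrightarrow> A *v v l = l *s v l"
    and "(\<Sum>l\<in>L. c l *s v l) = 0"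
  shows "\<forall>l\<in>L. c l *s v l = 0"
  using assms
proof (induction L arbitrary: c rule: finite_induct)
  case empty
  then show ?case by simp
next
  case (insert m L c)
  have S: "c m *s v m + (\<Sum>l\<in>L. c l *s v l) = 0" using insert by simp
  have "(\<Sum>l\<in>L. ((l - m) * c l) *s v l) = A *v (c m *s v m + (\<Sum>l\<in>L. c l *s v l)) - m *s (c m *s v m + (\<Sum>l\<in>L. c l *s v l))"
    using insert.prems(1) insert.hyps(2)
    by (simp add: vec.sum vector_scalar_commute matrix_vector_right_distrib sum_cmul[symmetric]
        sum_subtractf[symmetric] vector_smult_assoc vector_sub_rdistrib algebra_simps)
  also have "\<dots> = 0" using S by simp
  finally have "\<forall>l\<in>L. ((l - m) * c l) *s v l = 0"
    using insert.IH[of "\<lambda>l. (l - m) * c l"] insert.prems(1) by blast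
  then have L0: "\<forall>l\<in>L. c l *s v l = 0" using insert.hyps(2) by auto
  then have "c m *s v m = 0" using S by (simp add: sum.neutral)
  then show ?case using L0 by simp
qed

(* Hence there are at most n eigenvalues, so the spectral radius is a genuine maximum. *)
lemma finite_eigenvalues: "finite {lam. is_eigenvalue (P::real^'n^'n) lam}"
proof (rule ccontr)
  let ?E = "{lam. is_eigenvalue P lam}"
  let ?d = "vec.dim (UNIV :: (complex^'n) set)"
  assume "infinite ?E"
  then obtain L where L: "L \<subseteq> ?E" "finite L" "card L = Suc ?d"
    using infinite_arbitrarily_large by blast
  define v where "v l = (SOME w. w \<noteq> 0 \<and> cplx_mat P *v w = l *s w)" for l
  have v: "v l \<noteq> 0 \<and> cplx_mat P *v v l = l *s v l" if "l \<in> L" for l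
  proof -
    have "\<exists>w. w \<noteq> 0 \<and> cplx_mat P *v w = l *s w" using L(1) that by (auto simp: is_eigenvalue_def)
    then show ?thesis unfolding v_def by (rule someI_ex)
  qed
  have inj: "inj_on v L"
  proof
    fix l1 l2 assume l: "l1 \<in> L" "l2 \<in> L" "v l1 = v l2"
    then have "l1 *s v l1 = l2 *s v l1" using v by metis
    then have "(l1 - l2) *s v l1 = 0" by (simp add: vector_sub_rdistrib)
    then show "l1 = l2" using v[OF l(1)] by simp
  qed
  have "vec.independent (v ` L)"
  proof
    assume "vec.dependent (v ` L)"
    then obtain c where c: "\<exists>w\<in>v ` L. c w \<noteq> 0" "(\<Sum>w\<in>v ` L. c w *s w) = 0"
      using vec.dependent_finite[of "v ` L"] L(2) by blast
    have "(\<Sum>l\<in>L. c (v l) *s v l) = 0" using c(2) by (simp add: sum.reindex[OF inj])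
    then have "\<forall>l\<in>L. c (v l) *s v l = 0"
      using eigenvectors_independent[OF L(2), of "cplx_mat P" v "\<lambda>l. c (v l)"] v by blast
    then show False using c(1) v by auto
  qed
  then have "card (v ` L) \<le> ?d"
    using vec.independent_bound_general vec.dim_subset[of "v ` L" UNIV] by fastforce
  then show False using L(3) by (simp add: card_image[OF inj])
qed

lemma singular_shift_eigenvalue:
  fixes P :: "real^'n^'n"
  assumes "\<not> invertible (t *\<^sub>R mat 1 - P)"
  shows "is_eigenvalue P (complex_of_real t)"
proof -
  obtain x where x: "x \<noteq> 0" "(t *\<^sub>R mat 1 - P) *v x = 0"
    using assms matrix_left_invertible_ker invertible_left_inverse by blast
  then have tx: "P *v x = t *\<^sub>R x" by (simp add: shift_mult)
  define w :: "complex^'n" where "w = (\<chi> i. complex_of_real (x $ i))"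
  have "w \<noteq> 0" using x(1) by (auto simp: w_def vec_eq_iff)
  moreover have "cplx_mat P *v w = complex_of_real t *s w"
  proof -
    have "(\<Sum>j\<in>UNIV. P $ i $ j * x $ j) = t * x $ i" for i
      using arg_cong[OF tx, of "\<lambda>v. v $ i"] by (simp add: matrix_vector_mult_def)
    then show ?thesis
      by (simp add: vec_eq_iff matrix_vector_mult_def cplx_mat_def w_def flip: of_real_mult of_real_sum)
  qed
  ultimately show ?thesis unfolding is_eigenvalue_def by blast
qed

lemma invertible_above_spectral_radius:
  fixes P :: "real^'n^'n"
  assumes "spectral_radius P < t"
  shows "invertible (t *\<^sub>R mat 1 - P)"
proof (rule ccontr)
  assume "\<not> invertible (t *\<^sub>R mat 1 - P)"
  then have "cmod (complex_of_real t) \<in> cmod ` {lam. is_eigenvalue P lam}"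
    using singular_shift_eigenvalue by blast
  then have "cmod (complex_of_real t) \<le> spectral_radius P"
    unfolding spectral_radius_def using finite_eigenvalues[of P] by (intro Max_ge) auto
  then show False using assms by simp
qed

(* Connectedness: the monotone parameters form an up-set containing large t; its infimum, if it
   lay strictly above s >= rho(P), would be monotone by closedness and then not minimal by openness. *)
lemma shift_monotone_above_spectral_radius:
  fixes P :: "real^'n^'n"
  assumes P: "nonneg_mat P" and s: "spectral_radius P \<le> s" and "s < t"
  shows "shift_monotone P t"
proof (rule ccontr)
  assume bad: "\<not> shift_monotone P t"
  define G where "G = {t'. shift_monotone P t'}"
  have "(\<Sum>i\<in>UNIV. \<Sum>j\<in>UNIV. P $ i $ j) + 1 \<in> G"
    unfolding G_def using shift_monotone_large[OF P] by simp
  then have "G \<noteq> {}" by blast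
  have G_above: "t < g" if "g \<in> G" for g
  proof (rule ccontr)
    assume "\<not> t < g"
    then show False using bad shift_monotone_upward[OF P, of g t] that by (simp add: G_def)
  qed
  then have "bdd_below G" by (intro bdd_belowI[of _ t]) (simp add: less_imp_le)
  define \<tau> where "\<tau> = Inf G"
  have "t \<le> \<tau>" unfolding \<tau>_def using G_above \<open>G \<noteq> {}\<close> by (intro cInf_greatest) (simp_all add: less_imp_le)
  have above: "shift_monotone P t'" if "\<tau> < t'" for t'
  proof -
    have "\<exists>g\<in>G. g < t'"
      using that cInf_less_iff[OF \<open>G \<noteq> {}\<close> \<open>bdd_below G\<close>] by (simp add: \<tau>_def)
    then obtain g where "g \<in> G" "g < t'" by blast
    then show ?thesis using shift_monotone_upward[OF P, of g t'] by (simp add: G_def less_imp_le)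
  qed
  have "invertible (\<tau> *\<^sub>R mat 1 - P)"
    using s \<open>s < t\<close> \<open>t \<le> \<tau>\<close> by (intro invertible_above_spectral_radius) simp
  then have "shift_monotone P \<tau>" using above by (rule shift_monotone_closed)
  then obtain t' where "t' < \<tau>" and "t' \<in> G" using shift_monotone_open[OF P] G_def by blast
  then show False using cInf_lower[OF \<open>t' \<in> G\<close> \<open>bdd_below G\<close>] unfolding \<tau>_def by simp
qed

(* A nonsingular M-matrix is inverse-monotone (the limiting case s = rho(P) uses closedness). *)
lemma nonsingular_M_matrix_monotone:
  fixes M :: "real^'n^'n"
  assumes "nonsingular_M_matrix M" and "0 \<le> M *v x"
  shows "0 \<le> x"
proof -
  obtain s P where M: "M = s *\<^sub>R mat 1 - P" and P: "nonneg_mat P" and s: "spectral_radius P \<le> s"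
    and inv: "invertible M"
    using assms(1) unfolding nonsingular_M_matrix_def M_matrix_def by blast
  have "shift_monotone P s"
    using inv shift_monotone_above_spectral_radius[OF P s] unfolding M by (rule shift_monotone_closed)
  then show ?thesis using assms(2) by (simp add: M shift_mult shift_monotone_def)
qed

lemma nonsingular_M_matrix_inverse_mono:
  fixes M :: "real^'n^'n"
  assumes "nonsingular_M_matrix M" and "u \<le> v"
  shows "matrix_inv M *v u \<le> matrix_inv M *v v"
proof -
  have "invertible M" using assms(1) by (simp add: nonsingular_M_matrix_def)
  then have "M *v (matrix_inv M *v v - matrix_inv M *v u) = v - u"
    by (simp add: matrix_vector_mult_diff_distrib matrix_inv_cancel)
  moreover have "0 \<le> v - u" using assms(2) by (simp add: less_eq_vec_def)
  ultimately have "0 \<le> matrix_inv M *v v - matrix_inv M *v u"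
    using nonsingular_M_matrix_monotone[OF assms(1)] by metis
  then show ?thesis by (simp add: less_eq_vec_def)
qed

lemma bilinear_quadratic_mono:
  fixes b :: "real^'n \<Rightarrow> real^'n \<Rightarrow> real^'n"
  assumes bil: "bilinear b" and pos: "\<And>u v. 0 \<le> u \<Longrightarrow> 0 \<le> v \<Longrightarrow> 0 \<le> b u v"
    and "0 \<le> x" and "x \<le> z"
  shows "b x x \<le> b z z"
proof -
  have d: "0 \<le> z - x" and "0 \<le> z" using assms(3,4) by (auto simp: less_eq_vec_def intro: order_trans)
  have "b z z - b x x = b (z - x) z + b x (z - x)"
    using bil by (simp add: bilinear_lsub bilinear_rsub algebra_simps)
  also have "0 \<le> \<dots>" using pos[OF d \<open>0 \<le> z\<close>] pos[OF \<open>0 \<le> x\<close> d] by (simp add: less_eq_vec_def)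
  finally show ?thesis by (simp add: less_eq_vec_def)
qed

lemma LIMSEQ_le_vec:
  fixes X Y :: "nat \<Rightarrow> real^'n"
  assumes "X \<longlonglongrightarrow> x" and "Y \<longlonglongrightarrow> y" and "\<And>k. X k \<le> Y k"
  shows "x \<le> y"
  unfolding less_eq_vec_def
proof
  fix i
  show "x $ i \<le> y $ i"
    using assms(3) by (intro LIMSEQ_le[OF tendsto_vec_nth[OF assms(1)] tendsto_vec_nth[OF assms(2)]])
      (simp add: less_eq_vec_def)
qed

(* Kleene iteration: a continuous map, monotone on the cone with 0 <= phi 0, has a least fixed
   point in the cone below every nonnegative supersolution, namely lim phi^k 0. *)
lemma least_fixed_point:
  fixes \<phi> :: "real^'n \<Rightarrow> real^'n"
  assumes mono: "\<And>x z. 0 \<le> x \<Longrightarrow> x \<le> z \<Longrightarrow> \<phi> x \<le> \<phi> z"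
    and start: "0 \<le> \<phi> 0" and cont: "\<And>x. isCont \<phi> x"
    and super: "0 \<le> y" "\<phi> y \<le> y"
  obtains x where "0 \<le> x" and "\<phi> x = x" and "x \<le> y"
    and "\<And>z. 0 \<le> z \<Longrightarrow> \<phi> z \<le> z \<Longrightarrow> x \<le> z"
proof -
  define X where "X k = (\<phi> ^^ k) 0" for k
  have X_nonneg: "0 \<le> X k" for k
  proof (induction k)
    case (Suc k)
    have "0 \<le> \<phi> 0" by (rule start)
    also have "\<phi> 0 \<le> \<phi> (X k)" using mono[OF order_refl Suc] .
    finally show ?case by (simp add: X_def)
  qed (simp add: X_def)
  have X_inc: "X k \<le> X (Suc k)" for k
  proof (induction k)
    case (Suc k)
    then show ?case using mono[OF X_nonneg Suc] by (simp add: X_def)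
  qed (simp add: X_def start)
  have X_below: "X k \<le> z" if "0 \<le> z" "\<phi> z \<le> z" for z k
  proof (induction k)
    case (Suc k)
    have "\<phi> (X k) \<le> \<phi> z" using mono[OF X_nonneg Suc] .
    also have "\<dots> \<le> z" by (rule that(2))
    finally show ?case by (simp add: X_def)
  qed (simp add: X_def that(1))
  define x where "x = (\<chi> i. SUP k. X k $ i)"
  have bdd: "bdd_above (range (\<lambda>k. X k $ i))" for i
    using X_below[OF super] by (auto simp: bdd_above_def less_eq_vec_def)
  have "incseq (\<lambda>k. X k $ i)" for i
    using X_inc by (intro incseq_SucI) (simp add: less_eq_vec_def)
  then have lim: "X \<longlonglongrightarrow> x"
    by (intro vec_tendstoI) (simp add: x_def LIMSEQ_incseq_SUP[OF bdd])
  show thesis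
  proof
    show "0 \<le> x" using X_nonneg by (intro LIMSEQ_le_vec[OF tendsto_const lim])
    have "(\<lambda>k. \<phi> (X k)) \<longlonglongrightarrow> \<phi> x" using cont lim by (rule isCont_tendsto_compose)
    moreover have "(\<lambda>k. \<phi> (X k)) \<longlonglongrightarrow> x" using LIMSEQ_Suc[OF lim] by (simp add: X_def)
    ultimately show "\<phi> x = x" by (rule LIMSEQ_unique)
    show below: "x \<le> z" if "0 \<le> z" "\<phi> z \<le> z" for z
      using X_below[OF that] by (intro LIMSEQ_le_vec[OF lim tendsto_const])
    show "x \<le> y" using below[OF super] .
  qed
qed

(* If the box [0, y] is invariant under x |-> M^{-1}(a + b(x,x)), Condition A1 holds with l an
   enumeration of the coordinates and z = l y. *)
lemma condition_A1_box:
  fixes M :: "real^'n^'n"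
  assumes y: "0 \<le> y"
    and box: "\<And>x. 0 \<le> x \<Longrightarrow> x \<le> y \<Longrightarrow> matrix_inv M *v (a + b x x) \<le> y"
  shows "condition_A1 M a b"
proof -
  define m where "m = CARD('n)"
  obtain g where g: "bij_betw g {..<m} (UNIV :: 'n set)"
    unfolding m_def using ex_bij_betw_nat_finite[of "UNIV :: 'n set"] by (auto simp: atLeast0LessThan)
  then have g_onto: "\<exists>i<m. g i = k" for k
    unfolding bij_betw_def by (metis UNIV_I imageE lessThan_iff)
  define l where "l x i = (if i < m then x $ g i else 0)" for x :: "real^'n" and i
  define z where "z = l y"
  have le_iff: "(\<forall>i<m. l x i \<le> l x' i) \<longleftrightarrow> x \<le> x'" for x x'
  proof
    assume le: "\<forall>i<m. l x i \<le> l x' i"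
    show "x \<le> x'"
      unfolding less_eq_vec_def
    proof
      fix k
      obtain i where "i < m" "g i = k" using g_onto by blast
      then show "x $ k \<le> x' $ k" using le by (auto simp: l_def)
    qed
  qed (simp add: l_def less_eq_vec_def)
  have "weakly_positive m l"
    unfolding weakly_positive_def linear_to_def
  proof (intro conjI allI impI)
    show "linear (\<lambda>x. l x i)" if "i < m" for i
      using that by (simp add: l_def bounded_linear.linear[OF bounded_linear_vec_nth])
    show "l x i = 0" if "m \<le> i" for x i using that by (simp add: l_def)
    fix x :: "real^'n" assume x: "0 \<le> x \<and> x \<noteq> 0"
    show "0 \<le> l x i" if "i < m" for i using x by (simp add: l_def less_eq_vec_def)
    obtain k where "x $ k \<noteq> 0" using x by (auto simp: vec_eq_iff)
    then show "\<exists>i<m. l x i \<noteq> 0" using g_onto[of k] by (auto simp: l_def)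
  qed
  moreover have "\<forall>i<m. 0 \<le> z i" using y le_iff[of 0 y] by (simp add: z_def l_def)
  moreover have "\<forall>i<m. l (matrix_inv M *v (a + b x x)) i \<le> z i"
    if "0 \<le> x" and "\<forall>i<m. l x i \<le> z i" for x
  proof -
    have "x \<le> y" using that(2) le_iff[of x y] by (simp add: z_def)
    then show ?thesis using box[OF that(1)] le_iff by (simp add: z_def)
  qed
  ultimately show ?thesis unfolding condition_A1_def by blast
qed

lemma quadratic_map_mono:
  fixes M :: "real^'n^'n" and b :: "real^'n \<Rightarrow> real^'n \<Rightarrow> real^'n"
  assumes "nonsingular_M_matrix M" and "bilinear b"
    and "\<And>u v. 0 \<le> u \<Longrightarrow> 0 \<le> v \<Longrightarrow> 0 \<le> b u v" and "0 \<le> x" and "x \<le> z"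
  shows "matrix_inv M *v (a + b x x) \<le> matrix_inv M *v (a + b z z)"
  using bilinear_quadratic_mono[OF assms(2-5)]
  by (intro nonsingular_M_matrix_inverse_mono[OF assms(1)]) (simp add: less_eq_vec_def)

lemma quadratic_map_continuous:
  fixes M :: "real^'n^'n" and b :: "real^'n \<Rightarrow> real^'n \<Rightarrow> real^'n"
  assumes "bilinear b"
  shows "isCont (\<lambda>x. matrix_inv M *v (a + b x x)) x"
proof -
  have "bounded_bilinear b" using assms bilinear_conv_bounded_bilinear by blast
  then have "isCont (\<lambda>x. b x x) x" by (rule bounded_bilinear.isCont) (rule continuous_ident)+
  then have "isCont (\<lambda>x. a + b x x) x" by (intro isCont_add continuous_const)
  then show ?thesis by (rule bounded_linear.isCont[OF matrix_vector_mul_bounded_linear])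
qed

lemma solution_iff_fixed_point:
  fixes M :: "real^'n^'n"
  assumes "invertible M"
  shows "is_solution M a b z \<longleftrightarrow> 0 \<le> z \<and> matrix_inv M *v (a + b z z) = z"
  using matrix_inv_cancel[OF assms] unfolding is_solution_def by metis

lemma supersolution:
  fixes M :: "real^'n^'n"
  assumes "nonsingular_M_matrix M" and "0 \<le> F_map M a b y"
  shows "matrix_inv M *v (a + b y y) \<le> y"
proof -
  have "a + b y y \<le> M *v y" using assms(2) by (simp add: F_map_def less_eq_vec_def algebra_simps)
  then have "matrix_inv M *v (a + b y y) \<le> matrix_inv M *v (M *v y)"
    by (rule nonsingular_M_matrix_inverse_mono[OF assms(1)])
  then show ?thesis using assms(1) by (simp add: matrix_inv_cancel nonsingular_M_matrix_def)
qed

theorem mainTheorem5: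
  fixes M :: "real^'n^'n" and a :: "real^'n" and b :: "real^'n \<Rightarrow> real^'n \<Rightarrow> real^'n"
    and y :: "real^'n"
  assumes "nonsingular_M_matrix M"
    and "a \<ge> 0"
    and "bilinear b"
    and "\<And>u v. u \<ge> 0 \<Longrightarrow> v \<ge> 0 \<Longrightarrow> b u v \<ge> 0"
    and "y \<ge> 0"
    and "F_map M a b y \<ge> 0"
  shows "condition_A1 M a b \<and> (\<exists>xs. is_minimal_solution M a b xs \<and> xs \<le> y)"
proof -
  define \<phi> where "\<phi> x = matrix_inv M *v (a + b x x)" for x
  have \<phi>_mono: "\<phi> x \<le> \<phi> z" if "0 \<le> x" "x \<le> z" for x z
    unfolding \<phi>_def using quadratic_map_mono[OF assms(1,3,4) that] .
  have \<phi>_0: "0 \<le> \<phi> 0"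
    using nonsingular_M_matrix_inverse_mono[OF assms(1,2)] bilinear_lzero[OF assms(3)] by (simp add: \<phi>_def)
  have \<phi>_y: "\<phi> y \<le> y" unfolding \<phi>_def using assms(1,6) by (rule supersolution)
  have \<phi>_cont: "isCont \<phi> x" for x unfolding \<phi>_def using assms(3) by (rule quadratic_map_continuous)
  obtain x where x: "0 \<le> x" "\<phi> x = x" "x \<le> y"
      and least: "\<And>z. 0 \<le> z \<Longrightarrow> \<phi> z \<le> z \<Longrightarrow> x \<le> z"
    using least_fixed_point[OF \<phi>_mono \<phi>_0 \<phi>_cont assms(5) \<phi>_y] by metis
  have "invertible M" using assms(1) by (simp add: nonsingular_M_matrix_def)
  then have "is_solution M a b z \<longleftrightarrow> 0 \<le> z \<and> \<phi> z = z" for z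
    unfolding \<phi>_def by (rule solution_iff_fixed_point)
  then have "is_minimal_solution M a b x"
    unfolding is_minimal_solution_def using x least by simp
  moreover have "condition_A1 M a b"
  proof (rule condition_A1_box[OF assms(5)])
    show "matrix_inv M *v (a + b z z) \<le> y" if "0 \<le> z" "z \<le> y" for z
      using order_trans[OF \<phi>_mono[OF that] \<phi>_y] by (simp add: \<phi>_def)
  qed
  ultimately show ?thesis using x by blast
qed

end
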